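(* Let $G$ be a finite $2$-group having a normal subgroup $N$ with $N\cong C_2\times C_2$. Then $G$ is not a $2$-closed group.
   Context: Permutations act on the right. For $X\leq{\rm Sym}(\Omega)$, the $2$-closure of $X$ on $\Omega$ is $X^{(2),\Omega}=\{\theta\in{\rm Sym}(\Omega)\mid \forall \alpha,\beta\in\Omega\ \exists g\in X:\ \alpha^\theta=\alpha^g,\ \beta^\theta=\beta^g\}$. An abstract group $G$ is called a $2$-closed group if $H=H^{(2),\Omega}$ for every set $\Omega$ and every subgroup $H\leq{\rm Sym}(\Omega)$ with $H\cong G$. $C_2$ is the cyclic group of order $2$. *)

theory Defs
  imports "HOL-Algebra.Algebra"
begin

text \<open>Sym(Omega) is BijGroup Omega (bijections of Omega, extensional outside Omega).
  The 2-closure of a set S of permutations of Omega.\<close>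
definition two_closure :: "'b set \<Rightarrow> ('b \<Rightarrow> 'b) set \<Rightarrow> ('b \<Rightarrow> 'b) set" where
  "two_closure Om S =
     {th \<in> Bij Om. \<forall>a\<in>Om. \<forall>b\<in>Om. \<exists>g\<in>S. th a = g a \<and> th b = g b}"

text \<open>G is 2-closed with respect to all permutation domains Omega drawn from the type 'b:
  every subgroup of Sym(Omega) isomorphic to G equals its 2-closure.\<close>
definition two_closed_group :: "('a, 'c) monoid_scheme \<Rightarrow> 'b itself \<Rightarrow> bool" where
  "two_closed_group G (_ :: 'b itself) \<longleftrightarrow>
     (\<forall>(Om :: 'b set) H. subgroup H (BijGroup Om) \<and> ((BijGroup Om)\<lparr>carrier := H\<rparr>) \<cong> G
        \<longrightarrow> two_closure Om H = H)"

abbreviation C2 :: "int monoid" where "C2 \<equiv> integer_mod_group 2"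

end

theory Submission
  imports Defs
begin

text \<open>
  Counting fixed points of the conjugation action of the 2-group G on the three involutions of N
  yields a central involution z in N; for any other p in N we get N = {1, z, p, pz}, and conjugation
  can only swap p and pz. Let G act by left multiplication on the disjoint union of its left coset
  spaces modulo the subgroups {1, p}, {1, pz} and {1, z}; the action is faithful since
  {1, p} and {1, pz} meet trivially. The permutation acting as p on the cosets of {1, z} and
  trivially elsewhere is not induced by G, yet it agrees with an element of G on any two points:
  the conjugate x u x\<inverse> (u = p or pz) fixes x{1, u}, lies in {p, pz}, and therefore acts on the
  cosets of the central subgroup {1, z} exactly as p does. Transporting this finite action to a set
  of natural numbers gives a subgroup of Sym(\<nat>) isomorphic to G that is not 2-closed.
\<close>

no_notation (ASCII) subset_mset (infix \<open><#\<close> 50)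

section \<open>Transporting permutation groups along injections\<close>

definition transfer_perm :: "('c \<Rightarrow> 'b) \<Rightarrow> 'c set \<Rightarrow> ('c \<Rightarrow> 'c) \<Rightarrow> 'b \<Rightarrow> 'b" where
  "transfer_perm e Om f = (\<lambda>y \<in> e ` Om. e (f (inv_into Om e y)))"

lemma transfer_perm_apply:
  "inj_on e Om \<Longrightarrow> x \<in> Om \<Longrightarrow> transfer_perm e Om f (e x) = e (f x)"
  by (simp add: transfer_perm_def)

lemma transfer_perm_Bij:
  assumes e: "inj_on e Om" and f: "f \<in> Bij Om"
  shows "transfer_perm e Om f \<in> Bij (e ` Om)"
proof -
  have "bij_betw (e \<circ> f \<circ> inv_into Om e) (e ` Om) (e ` Om)"
    using f e by (auto simp: Bij_def intro!: bij_betw_trans bij_betw_inv_into inj_on_imp_bij_betw)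
  then have "bij_betw (transfer_perm e Om f) (e ` Om) (e ` Om)"
    by (rule bij_betw_cong[THEN iffD1, rotated]) (simp add: transfer_perm_def)
  then show ?thesis
    by (simp add: Bij_def transfer_perm_def)
qed

lemma transfer_perm_inj_on:
  assumes e: "inj_on e Om"
  shows "inj_on (transfer_perm e Om) (Bij Om)"
proof (rule inj_onI)
  fix f g assume f: "f \<in> Bij Om" and g: "g \<in> Bij Om" and eq: "transfer_perm e Om f = transfer_perm e Om g"
  show "f = g"
  proof (rule extensionalityI[of f Om])
    fix x assume x: "x \<in> Om"
    have "e (f x) = e (g x)"
      using eq transfer_perm_apply[OF e x] by metis
    then show "f x = g x"
      using e x f g Bij_imp_funcset by (fastforce dest: inj_onD)
  qed (use f g Bij_imp_extensional in auto)
qed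

lemma transfer_perm_hom:
  assumes e: "inj_on e Om"
  shows "transfer_perm e Om \<in> hom (BijGroup Om) (BijGroup (e ` Om))"
proof (rule homI)
  show "transfer_perm e Om f \<in> carrier (BijGroup (e ` Om))" if "f \<in> carrier (BijGroup Om)" for f
    using that transfer_perm_Bij[OF e] by (simp add: BijGroup_def)
  fix f g assume "f \<in> carrier (BijGroup Om)" "g \<in> carrier (BijGroup Om)"
  then have f: "f \<in> Bij Om" and g: "g \<in> Bij Om" by (simp_all add: BijGroup_def)
  have "transfer_perm e Om (compose Om f g)
          = compose (e ` Om) (transfer_perm e Om f) (transfer_perm e Om g)"
  proof (rule extensionalityI[of _ "e ` Om"])
    fix y assume "y \<in> e ` Om"
    then obtain x where x: "x \<in> Om" and y: "y = e x" by blast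
    have "g x \<in> Om"
      using g x Bij_imp_funcset by blast
    then show "transfer_perm e Om (compose Om f g) y
                 = compose (e ` Om) (transfer_perm e Om f) (transfer_perm e Om g) y"
      using e x by (simp add: y compose_def transfer_perm_apply)
  qed (simp_all add: transfer_perm_def compose_def)
  then show "transfer_perm e Om (f \<otimes>\<^bsub>BijGroup Om\<^esub> g)
               = transfer_perm e Om f \<otimes>\<^bsub>BijGroup (e ` Om)\<^esub> transfer_perm e Om g"
    using f g transfer_perm_Bij[OF e] by (simp add: BijGroup_def)
qed

lemma transfer_perm_two_closure:
  assumes e: "inj_on e Om" and th: "th \<in> two_closure Om S"
  shows "transfer_perm e Om th \<in> two_closure (e ` Om) (transfer_perm e Om ` S)"
  unfolding two_closure_def
proof (intro CollectI conjI ballI)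
  show "transfer_perm e Om th \<in> Bij (e ` Om)"
    using th transfer_perm_Bij[OF e] by (simp add: two_closure_def)
  fix a b assume "a \<in> e ` Om" "b \<in> e ` Om"
  then obtain x y where xy: "x \<in> Om" "y \<in> Om" "a = e x" "b = e y" by blast
  then obtain g where "g \<in> S" "th x = g x" "th y = g y"
    using th by (auto simp: two_closure_def)
  with xy e show "\<exists>h\<in>transfer_perm e Om ` S.
      transfer_perm e Om th a = h a \<and> transfer_perm e Om th b = h b"
    by (auto simp: transfer_perm_apply)
qed

lemma subset_two_closure: "S \<subseteq> Bij Om \<Longrightarrow> S \<subseteq> two_closure Om S"
  by (auto simp: two_closure_def)

lemma two_closure_faithful_action:
  fixes e :: "'c \<Rightarrow> 'b"
  assumes closed: "two_closed_group G TYPE('b)" and act: "faithful_action G Om \<phi>"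
    and e: "inj_on e Om"
  shows "two_closure Om (\<phi> ` carrier G) = \<phi> ` carrier G"
proof -
  interpret faithful_action G Om \<phi> by (fact act)
  let ?T = "transfer_perm e Om"
  define \<psi> where "\<psi> = ?T \<circ> \<phi>"
  have \<phi>_Bij: "\<phi> ` carrier G \<subseteq> Bij Om"
    using group_hom.hom_closed[OF group_hom] by (auto simp: BijGroup_def)
  have hom: "\<psi> \<in> hom G (BijGroup (e ` Om))"
    unfolding \<psi>_def using hom_compose group_hom.homh[OF group_hom] transfer_perm_hom[OF e] by blast
  have inj: "inj_on \<psi> (carrier G)"
    unfolding \<psi>_def using faithful transfer_perm_inj_on[OF e] \<phi>_Bij
    by (blast intro: comp_inj_on inj_on_subset)
  have ghom: "group_hom G (BijGroup (e ` Om)) \<psi>"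
    using hom group_hom.axioms(1)[OF group_hom] group_BijGroup
    by (simp add: group_hom_def group_hom_axioms_def)
  have "\<psi> \<in> iso G ((BijGroup (e ` Om))\<lparr>carrier := \<psi> ` carrier G\<rparr>)"
    using hom inj by (auto simp: iso_def hom_def bij_betw_def)
  then have "(BijGroup (e ` Om))\<lparr>carrier := \<psi> ` carrier G\<rparr> \<cong> G"
    by (intro group.iso_sym[OF group_hom.axioms(1)[OF ghom]] is_isoI)
  then have closure_\<psi>: "two_closure (e ` Om) (\<psi> ` carrier G) = \<psi> ` carrier G"
    using closed group_hom.img_is_subgroup[OF ghom] by (auto simp: two_closed_group_def)
  have "two_closure Om (\<phi> ` carrier G) \<subseteq> \<phi> ` carrier G"
  proof
    fix th assume th: "th \<in> two_closure Om (\<phi> ` carrier G)"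
    have "?T th \<in> two_closure (e ` Om) (\<psi> ` carrier G)"
      using transfer_perm_two_closure[OF e th] by (simp add: \<psi>_def image_comp)
    then obtain g where g: "g \<in> carrier G" "?T th = ?T (\<phi> g)"
      using closure_\<psi> by (auto simp: \<psi>_def)
    moreover have "th \<in> Bij Om"
      using th by (simp add: two_closure_def)
    ultimately have "th = \<phi> g"
      using inj_onD[OF transfer_perm_inj_on[OF e]] \<phi>_Bij by blast
    then show "th \<in> \<phi> ` carrier G"
      using g(1) by blast
  qed
  then show ?thesis
    using subset_two_closure[OF \<phi>_Bij] by blast
qed

section \<open>Left multiplication on coset spaces\<close>

definition lcoset_space :: "('a, 'm) monoid_scheme \<Rightarrow> ('i \<Rightarrow> 'a set) \<Rightarrow> 'i set \<Rightarrow> ('i \<times> 'a set) set"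
  where "lcoset_space G H I = (SIGMA i:I. (\<lambda>x. x <#\<^bsub>G\<^esub> H i) ` carrier G)"

definition lcoset_action ::
    "('a, 'm) monoid_scheme \<Rightarrow> ('i \<Rightarrow> 'a set) \<Rightarrow> 'i set \<Rightarrow> 'a \<Rightarrow> 'i \<times> 'a set \<Rightarrow> 'i \<times> 'a set"
  where "lcoset_action G H I g = (\<lambda>(i, C) \<in> lcoset_space G H I. (i, g <#\<^bsub>G\<^esub> C))"

context group
begin

lemma lcoset_spaceE:
  assumes "a \<in> lcoset_space G H I"
  obtains i x where "i \<in> I" "x \<in> carrier G" "a = (i, x <# H i)"
  using assms by (auto simp: lcoset_space_def)

lemma lcoset_in_lcoset_space: "i \<in> I \<Longrightarrow> x \<in> carrier G \<Longrightarrow> (i, x <# H i) \<in> lcoset_space G H I"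
  by (auto simp: lcoset_space_def)

lemma lcoset_space_finite:
  "finite I \<Longrightarrow> finite (carrier G) \<Longrightarrow> finite (lcoset_space G H I)"
  by (simp add: lcoset_space_def)

lemma lcoset_action_apply:
  assumes "H i \<subseteq> carrier G" "i \<in> I" "g \<in> carrier G" "x \<in> carrier G"
  shows "lcoset_action G H I g (i, x <# H i) = (i, (g \<otimes> x) <# H i)"
  using assms by (simp add: lcoset_action_def lcoset_space_def lcos_m_assoc)

lemma group_action_lcoset_action:
  assumes H: "\<And>i. i \<in> I \<Longrightarrow> H i \<subseteq> carrier G"
  shows "group_action G (lcoset_space G H I) (lcoset_action G H I)"
proof -
  let ?\<Omega> = "lcoset_space G H I" and ?\<phi> = "lcoset_action G H I"
  have closed: "?\<phi> g a \<in> ?\<Omega>" if "g \<in> carrier G" "a \<in> ?\<Omega>" for g a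
    using that(2) by (rule lcoset_spaceE) (use that H in \<open>auto simp: lcoset_action_apply lcoset_space_def\<close>)
  have cancel: "?\<phi> (inv g) (?\<phi> g a) = a" if "g \<in> carrier G" "a \<in> ?\<Omega>" for g a
    using that(2) by (rule lcoset_spaceE) (use that H in \<open>simp add: lcoset_action_apply m_assoc [symmetric]\<close>)
  have Bij: "?\<phi> g \<in> Bij ?\<Omega>" if g: "g \<in> carrier G" for g
  proof -
    have "bij_betw (?\<phi> g) ?\<Omega> ?\<Omega>"
      by (rule bij_betw_byWitness[of _ "?\<phi> (inv g)"])
        (use g closed cancel[of "inv g"] cancel in auto)
    then show ?thesis
      by (simp add: Bij_def lcoset_action_def)
  qed
  have mult: "?\<phi> (g \<otimes> h) = compose ?\<Omega> (?\<phi> g) (?\<phi> h)"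
    if g: "g \<in> carrier G" and h: "h \<in> carrier G" for g h
  proof (rule extensionalityI[of _ ?\<Omega>])
    fix a assume "a \<in> ?\<Omega>"
    then show "?\<phi> (g \<otimes> h) a = compose ?\<Omega> (?\<phi> g) (?\<phi> h) a"
      by (rule lcoset_spaceE) (use g h H in \<open>simp add: compose_def lcoset_action_apply lcoset_in_lcoset_space m_assoc\<close>)
  qed (simp_all add: lcoset_action_def compose_def)
  have "?\<phi> \<in> hom G (BijGroup ?\<Omega>)"
    by (rule homI) (simp_all add: BijGroup_def Bij mult)
  then show ?thesis
    by (simp add: group_action_def group_hom_def group_hom_axioms_def is_group group_BijGroup)
qed

end

lemma (in group) l_coset_pair:
  "x \<in> carrier G \<Longrightarrow> x <# {\<one>, u} = {x, x \<otimes> u}"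
  by (simp add: l_coset_def insert_commute)

lemma (in group) l_coset_pair_absorb:
  assumes "x \<in> carrier G" "u \<in> carrier G" "u \<otimes> u = \<one>"
  shows "(x \<otimes> u) <# {\<one>, u} = x <# {\<one>, u}"
  using assms by (auto simp: l_coset_def m_assoc)

section \<open>A faithful action whose 2-closure is larger\<close>

locale central_klein_four = group G for G (structure) +
  fixes z p
  assumes z_carrier: "z \<in> carrier G"
    and z_central: "\<And>g. g \<in> carrier G \<Longrightarrow> g \<otimes> z = z \<otimes> g"
    and z_square: "z \<otimes> z = \<one>"
    and z_ne_one: "z \<noteq> \<one>"
    and p_carrier: "p \<in> carrier G"
    and p_square: "p \<otimes> p = \<one>"
    and p_ne_one: "p \<noteq> \<one>"
    and p_ne_z: "p \<noteq> z"
    and p_conjugates: "\<And>x. x \<in> carrier G \<Longrightarrow> x \<otimes> p \<otimes> inv x \<in> {p, p \<otimes> z}"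
begin

lemma pz_carrier: "p \<otimes> z \<in> carrier G"
  using p_carrier z_carrier by simp

lemma pz_square: "(p \<otimes> z) \<otimes> (p \<otimes> z) = \<one>"
proof -
  have "(p \<otimes> z) \<otimes> (p \<otimes> z) = p \<otimes> (z \<otimes> p) \<otimes> z"
    using p_carrier z_carrier by (simp add: m_assoc)
  also have "\<dots> = (p \<otimes> p) \<otimes> (z \<otimes> z)"
    using p_carrier z_carrier by (simp add: z_central[OF p_carrier, symmetric] m_assoc)
  finally show ?thesis
    using p_square z_square by simp
qed

lemma pz_ne_p: "p \<otimes> z \<noteq> p"
  using p_carrier z_carrier z_ne_one by simp

lemma pz_ne_z: "p \<otimes> z \<noteq> z"
  using p_carrier z_carrier p_ne_one by simp

lemma conjugate_in_pair:
  assumes x: "x \<in> carrier G" and u: "u \<in> {p, p \<otimes> z}"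
  shows "x \<otimes> u \<otimes> inv x \<in> {p, p \<otimes> z}"
proof -
  have "x \<otimes> (p \<otimes> z) \<otimes> inv x = (x \<otimes> p \<otimes> inv x) \<otimes> z"
    using x p_carrier z_carrier by (simp add: z_central[of "inv x"] m_assoc)
  moreover have "(p \<otimes> z) \<otimes> z = p"
    using p_carrier z_carrier z_square by (simp add: m_assoc)
  moreover note p_conjugates[OF x]
  ultimately show ?thesis
    using u by fastforce
qed

abbreviation "cosets \<equiv> lcoset_space G (\<lambda>u. {\<one>, u}) {p, p \<otimes> z, z}"

abbreviation "act \<equiv> lcoset_action G (\<lambda>u. {\<one>, u}) {p, p \<otimes> z, z}"

lemma order_two_subgroups_carrier: "u \<in> {p, p \<otimes> z, z} \<Longrightarrow> {\<one>, u} \<subseteq> carrier G"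
  using p_carrier z_carrier by auto

lemma involutions_square: "u \<in> {p, p \<otimes> z, z} \<Longrightarrow> u \<otimes> u = \<one>"
  using p_square pz_square z_square by auto

lemma act_apply:
  assumes "g \<in> carrier G" "u \<in> {p, p \<otimes> z, z}" "x \<in> carrier G"
  shows "act g (u, x <# {\<one>, u}) = (u, (g \<otimes> x) <# {\<one>, u})"
  by (rule lcoset_action_apply) (use assms order_two_subgroups_carrier in auto)

lemma act_base_point:
  assumes "g \<in> carrier G" "u \<in> {p, p \<otimes> z, z}"
  shows "act g (u, \<one> <# {\<one>, u}) = (u, {g, g \<otimes> u})"
  using assms act_apply[OF assms] by (simp add: l_coset_pair)

lemma faithful_action_cosets: "faithful_action G cosets act"
proof -
  interpret group_action G cosets act
    by (rule group_action_lcoset_action) (rule order_two_subgroups_carrier)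
  show ?thesis
  proof
    show "inj_on act (carrier G)"
    proof (rule inj_onI, rule ccontr)
      fix g h assume g: "g \<in> carrier G" and h: "h \<in> carrier G" and eq: "act g = act h" and "g \<noteq> h"
      have "{g, g \<otimes> u} = {h, h \<otimes> u}" if "u \<in> {p, p \<otimes> z}" for u
        using fun_cong[OF eq, of "(u, \<one> <# {\<one>, u})"] that
          act_base_point[OF g, of u] act_base_point[OF h, of u] by auto
      with \<open>g \<noteq> h\<close> have "g = h \<otimes> p" "g = h \<otimes> (p \<otimes> z)"
        by (auto simp: doubleton_eq_iff)
      then have "h \<otimes> (p \<otimes> z) = h \<otimes> p"
        by simp
      then show False
        using h p_carrier pz_carrier pz_ne_p l_cancel by blast
    qed
  qed
qed

sublocale coset_action: faithful_action G cosets act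
  by (rule faithful_action_cosets)

lemma fst_act: "a \<in> cosets \<Longrightarrow> fst (act g a) = fst a"
  by (auto simp: lcoset_action_def split: prod.split)

definition twist :: "'a \<times> 'a set \<Rightarrow> 'a \<times> 'a set"
  where "twist = (\<lambda>a \<in> cosets. if fst a = z then act p a else a)"

lemma twist_Bij: "twist \<in> Bij cosets"
proof -
  have closed: "twist a \<in> cosets" if "a \<in> cosets" for a
    using that p_carrier coset_action.element_image by (auto simp: twist_def)
  have involution: "twist (twist a) = a" if a: "a \<in> cosets" for a
  proof (cases "fst a = z")
    case True
    have "act p a \<in> cosets"
      using a p_carrier coset_action.element_image by blast
    then have "twist (twist a) = act p (act p a)"
      using a True by (simp add: twist_def fst_act)
    also have "\<dots> = act \<one> a"
      using coset_action.composition_rule[OF a p_carrier p_carrier] p_square by simp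
    also have "\<dots> = a"
      using a by (simp flip: coset_action.id_eq_one)
    finally show ?thesis .
  qed (use a in \<open>simp add: twist_def\<close>)
  have "bij_betw twist cosets cosets"
    by (rule bij_betw_byWitness[of _ twist]) (use closed involution in auto)
  then show ?thesis
    by (simp add: Bij_def twist_def)
qed

lemma act_id: "a \<in> cosets \<Longrightarrow> act \<one> a = a"
  by (simp flip: coset_action.id_eq_one)

lemma act_conjugate_fixes:
  assumes u: "u \<in> {p, p \<otimes> z, z}" and x: "x \<in> carrier G"
  shows "act (x \<otimes> u \<otimes> inv x) (u, x <# {\<one>, u}) = (u, x <# {\<one>, u})"
proof -
  have u_carrier: "u \<in> carrier G"
    using u order_two_subgroups_carrier by blast
  have "act (x \<otimes> u \<otimes> inv x) (u, x <# {\<one>, u}) = (u, (x \<otimes> u \<otimes> inv x \<otimes> x) <# {\<one>, u})"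
    using u x u_carrier by (intro act_apply) auto
  also have "x \<otimes> u \<otimes> inv x \<otimes> x = x \<otimes> u"
    using x u_carrier by (simp add: m_assoc)
  finally show ?thesis
    using x u_carrier involutions_square[OF u] by (simp add: l_coset_pair_absorb)
qed

lemma act_on_z_cosets:
  assumes g: "g \<in> {p, p \<otimes> z}" and b: "b \<in> cosets" and b_z: "fst b = z"
  shows "act g b = act p b"
proof -
  obtain y where y: "y \<in> carrier G" and b_eq: "b = (z, y <# {\<one>, z})"
    using b b_z by (elim lcoset_spaceE) auto
  have "(g \<otimes> y) <# {\<one>, z} = (p \<otimes> y) <# {\<one>, z}"
  proof (cases "g = p")
    case False
    then have "g \<otimes> y = (p \<otimes> y) \<otimes> z"
      using g y p_carrier z_carrier by (simp add: m_assoc z_central[OF y])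
    then show ?thesis
      using y p_carrier z_carrier z_square by (simp add: l_coset_pair_absorb)
  qed simp
  moreover have "g \<in> carrier G"
    using g p_carrier pz_carrier by auto
  ultimately show ?thesis
    unfolding b_eq using y p_carrier by (simp add: act_apply)
qed

lemma twist_agrees_with_act:
  assumes a: "a \<in> cosets" and b: "b \<in> cosets" and b_z: "fst b = z"
  shows "\<exists>g\<in>carrier G. twist a = act g a \<and> twist b = act g b"
proof (cases "fst a = z")
  case True
  then show ?thesis
    using a b b_z p_carrier by (auto simp: twist_def)
next
  case False
  obtain u x where u: "u \<in> {p, p \<otimes> z}" and x: "x \<in> carrier G" and a_eq: "a = (u, x <# {\<one>, u})"
    using a False by (elim lcoset_spaceE) auto
  let ?g = "x \<otimes> u \<otimes> inv x"
  have g: "?g \<in> {p, p \<otimes> z}"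
    using conjugate_in_pair[OF x u] .
  have "twist a = act ?g a"
    using a a_eq False u x act_conjugate_fixes[of u x] by (simp add: twist_def)
  moreover have "twist b = act ?g b"
    using b b_z act_on_z_cosets[OF g b b_z] by (simp add: twist_def)
  moreover have "?g \<in> carrier G"
    using g p_carrier pz_carrier by auto
  ultimately show ?thesis
    by blast
qed

lemma twist_in_two_closure: "twist \<in> two_closure cosets (act ` carrier G)"
  unfolding two_closure_def
proof (intro CollectI conjI ballI)
  show "twist \<in> Bij cosets"
    by (rule twist_Bij)
  fix a b assume a: "a \<in> cosets" and b: "b \<in> cosets"
  have "\<exists>g\<in>carrier G. twist a = act g a \<and> twist b = act g b"
  proof (cases "fst a = z \<or> fst b = z")
    case True
    then show ?thesis
      using twist_agrees_with_act[OF a b] twist_agrees_with_act[OF b a] by blast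
  next
    case False
    then show ?thesis
      using a b act_id[OF a] act_id[OF b] by (intro bexI[of _ \<one>]) (auto simp: twist_def)
  qed
  then show "\<exists>h\<in>act ` carrier G. twist a = h a \<and> twist b = h b"
    by blast
qed

lemma twist_not_act: "twist \<notin> act ` carrier G"
proof
  assume "twist \<in> act ` carrier G"
  then obtain g where g: "g \<in> carrier G" and eq: "twist = act g"
    by blast
  have base: "(u, \<one> <# {\<one>, u}) \<in> cosets" if "u \<in> {p, p \<otimes> z, z}" for u
    using that by (intro lcoset_in_lcoset_space) auto
  have "{g, g \<otimes> u} = {\<one>, u}" if u: "u \<in> {p, p \<otimes> z}" for u
  proof -
    have "u \<noteq> z" "u \<in> carrier G"
      using u p_ne_z pz_ne_z p_carrier pz_carrier by auto
    then show ?thesis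
      using fun_cong[OF eq, of "(u, \<one> <# {\<one>, u})"] base[of u] u act_base_point[OF g, of u]
      by (auto simp: twist_def l_coset_pair)
  qed
  then have "g = \<one>"
    using pz_ne_p by (auto simp: doubleton_eq_iff)
  have "twist (z, \<one> <# {\<one>, z}) = (z, {p, p \<otimes> z})"
    using base[of z] act_base_point[OF p_carrier, of z] by (simp add: twist_def)
  moreover have "act g (z, \<one> <# {\<one>, z}) = (z, {\<one>, z})"
    using act_base_point[of g z] g z_carrier by (simp add: \<open>g = \<one>\<close>)
  ultimately have "{p, p \<otimes> z} = {\<one>, z}"
    using eq by simp
  then show False
    using p_ne_one p_ne_z by (auto simp: doubleton_eq_iff)
qed

lemma not_two_closed:
  assumes "finite (carrier G)"
  shows "\<not> two_closed_group G TYPE(nat)"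
proof
  assume closed: "two_closed_group G TYPE(nat)"
  have "finite cosets"
    using assms by (intro lcoset_space_finite) auto
  then obtain e :: "'a \<times> 'a set \<Rightarrow> nat" where "inj_on e cosets"
    by (metis finite_imp_inj_to_nat_seg)
  then have "two_closure cosets (act ` carrier G) = act ` carrier G"
    using two_closure_faithful_action[OF closed faithful_action_cosets] by blast
  then show False
    using twist_in_two_closure twist_not_act by simp
qed

end

section \<open>Normal Klein four-subgroups of 2-groups\<close>

lemma (in group_action) restrict_action:
  assumes F: "F \<subseteq> E" and invariant: "\<And>g x. g \<in> carrier G \<Longrightarrow> x \<in> F \<Longrightarrow> \<phi> g x \<in> F"
  shows "group_action G F (\<lambda>g. restrict (\<phi> g) F)"
proof -
  have G: "group G"
    using group_hom by (rule group_hom.axioms(1))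
  have Bij: "restrict (\<phi> g) F \<in> Bij F" if g: "g \<in> carrier G" for g
  proof -
    have cancel: "\<phi> g (\<phi> (inv g) x) = x" if "x \<in> F" for x
    proof -
      have x: "x \<in> E"
        using that F by blast
      have "\<phi> g (\<phi> (inv g) x) = \<phi> (g \<otimes> inv g) x"
        by (rule composition_rule[OF x g group.inv_closed[OF G g], symmetric])
      also have "\<dots> = \<phi> \<one> x"
        by (simp add: group.r_inv[OF G g])
      finally show ?thesis
        using x by (simp flip: id_eq_one)
    qed
    have "\<phi> (inv g) x \<in> F" if "x \<in> F" for x
      using invariant[OF group.inv_closed[OF G g] that] .
    then have "F \<subseteq> \<phi> g ` F"
      using cancel by (metis image_eqI subsetI)
    then have "\<phi> g ` F = F"
      using g invariant by blast
    moreover have "inj_on (\<phi> g) F"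
      using inj_prop[OF g] F by (rule inj_on_subset)
    ultimately show ?thesis
      by (simp add: Bij_def bij_betw_def)
  qed
  have "restrict (\<phi> (g \<otimes> h)) F = compose F (restrict (\<phi> g) F) (restrict (\<phi> h) F)"
    if "g \<in> carrier G" "h \<in> carrier G" for g h
  proof
    fix x
    show "restrict (\<phi> (g \<otimes> h)) F x = compose F (restrict (\<phi> g) F) (restrict (\<phi> h) F) x"
      using that F invariant composition_rule[of x g h] by (cases "x \<in> F") (auto simp: compose_def)
  qed
  then have "(\<lambda>g. restrict (\<phi> g) F) \<in> hom G (BijGroup F)"
    by (intro homI) (simp_all add: BijGroup_def Bij)
  then show ?thesis
    using group_hom by (simp add: group_action_def group_hom_def group_hom_axioms_def group_BijGroup)
qed

lemma (in group_action) prime_power_fixed_point: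
  assumes E: "finite E" and q: "Factorial_Ring.prime (q :: nat)" and order: "order G = q ^ n"
    and not_dvd: "\<not> q dvd card E"
  shows "\<exists>x\<in>E. orbit G \<phi> x = {x}"
proof (rule ccontr)
  assume no_fixed: "\<not> (\<exists>x\<in>E. orbit G \<phi> x = {x})"
  have "q dvd card orb" if orb_in: "orb \<in> orbits G E \<phi>" for orb
  proof -
    obtain x where x: "x \<in> E" and orb: "orb = orbit G \<phi> x"
      using orb_in by (auto simp: orbits_def)
    have "card orb dvd q ^ n"
      using orbit_stabilizer_theorem[OF x] by (metis orb order dvd_triv_left)
    then obtain i where orb_card: "card orb = q ^ i"
      using divides_primepow_nat[OF q] by blast
    have "card orb \<noteq> 1"
      using no_fixed x orbit_refl[OF x] by (auto simp: orb card_1_singleton_iff)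
    then have "i \<noteq> 0"
      using orb_card by auto
    then show ?thesis
      using orb_card by simp
  qed
  then have "q dvd (\<Sum>orb\<in>orbits G E \<phi>. card orb)"
    by (rule dvd_sum)
  also have "(\<Sum>orb\<in>orbits G E \<phi>. card orb) = (\<Sum>orb\<in>orbits G E \<phi>. \<Sum>x\<in>orb. 1)"
    by simp
  also have "\<dots> = card E"
    by (subst disjoint_sum[OF E]) simp
  finally show False
    using not_dvd by simp
qed

lemma (in group) prime_power_normal_subgroup_meets_center:
  assumes q: "Factorial_Ring.prime (q :: nat)" and order: "order G = q ^ n"
    and N: "N \<lhd> G" and finite_N: "finite N" and dvd_N: "q dvd card N"
  shows "\<exists>z\<in>N. z \<noteq> \<one> \<and> (\<forall>g\<in>carrier G. g \<otimes> z = z \<otimes> g)"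
proof -
  let ?S = "N - {\<one>}"
  let ?\<phi> = "\<lambda>g. \<lambda>h \<in> carrier G. g \<otimes> h \<otimes> inv g"
  interpret conj: group_action G "carrier G" ?\<phi>
    by (rule action_by_conjugation)
  have N_sub: "subgroup N G" and N_conj: "\<And>x h. x \<in> carrier G \<Longrightarrow> h \<in> N \<Longrightarrow> x \<otimes> h \<otimes> inv x \<in> N"
    using normal_invE[OF N] by blast+
  have S_carrier: "?S \<subseteq> carrier G"
    using subgroup.subset[OF N_sub] by blast
  have S_invariant: "?\<phi> g h \<in> ?S" if "g \<in> carrier G" "h \<in> ?S" for g h
    using that S_carrier N_conj by (auto simp: inv_solve_right')
  interpret conj_S: group_action G ?S "\<lambda>g. restrict (?\<phi> g) ?S"
    by (rule conj.restrict_action[OF S_carrier S_invariant])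
  have not_dvd: "\<not> q dvd card ?S"
  proof
    assume "q dvd card ?S"
    with dvd_N have "q dvd card N - card ?S"
      by (rule dvd_diff_nat)
    moreover have "card N - card ?S = 1"
    proof -
      have "\<one> \<in> N"
        using subgroup.one_closed[OF N_sub] .
      then have "card N \<noteq> 0" and "card ?S = card N - 1"
        using finite_N by auto
      then show ?thesis
        by simp
    qed
    ultimately show False
      using q by simp
  qed
  then obtain z where z: "z \<in> ?S" and fixed: "orbit G (\<lambda>g. restrict (?\<phi> g) ?S) z = {z}"
    using conj_S.prime_power_fixed_point[OF _ q order not_dvd] finite_N by blast
  have "g \<otimes> z = z \<otimes> g" if g: "g \<in> carrier G" for g
  proof -
    have z_carrier: "z \<in> carrier G"
      using z S_carrier by blast
    have "restrict (?\<phi> g) ?S z \<in> orbit G (\<lambda>g. restrict (?\<phi> g) ?S) z"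
      using g unfolding orbit_def by blast
    then have "g \<otimes> z \<otimes> inv g = z"
      using fixed z z_carrier by simp
    with z_carrier show ?thesis
      using g inv_solve_right'[of z "g \<otimes> z" g] by simp
  qed
  then show ?thesis
    using z by blast
qed

lemma card_iso_C2_C2:
  assumes "H \<cong> C2 \<times>\<times> C2"
  shows "card (carrier H) = 4"
  using iso_same_card[OF assms] by (simp add: carrier_integer_mod_group)

lemma iso_C2_C2_square_eq_one:
  assumes H: "group H" and iso: "H \<cong> C2 \<times>\<times> C2" and x: "x \<in> carrier H"
  shows "x \<otimes>\<^bsub>H\<^esub> x = \<one>\<^bsub>H\<^esub>"
proof -
  interpret H: group H by (fact H)
  obtain h where h: "h \<in> iso H (C2 \<times>\<times> C2)"
    using iso by (auto simp: is_iso_def)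
  then have hom: "h \<in> hom H (C2 \<times>\<times> C2)" and inj: "inj_on h (carrier H)"
    by (auto simp: iso_def bij_betw_def)
  obtain a b where ab: "h x = (a, b)"
    by (cases "h x")
  have "h (x \<otimes>\<^bsub>H\<^esub> x) = h x \<otimes>\<^bsub>C2 \<times>\<times> C2\<^esub> h x"
    using hom x by (simp add: hom_mult)
  also have "\<dots> = (0, 0)"
    using ab by (simp flip: mult_2)
  also have "\<dots> = h \<one>\<^bsub>H\<^esub>"
    using hom_one[OF hom H] DirProd_group[OF group_integer_mod_group group_integer_mod_group] by simp
  finally show ?thesis
    by (rule inj_onD[OF inj]) (simp_all add: x)
qed

lemma (in group) order_four_subgroup_decomp:
  assumes N: "subgroup N G" and card_N: "card N = 4"
    and z: "z \<in> N" "z \<noteq> \<one>" "z \<otimes> z = \<one>"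
  shows "\<exists>p. N - {\<one>, z} = {p, p \<otimes> z}"
proof -
  let ?R = "N - {\<one>, z}"
  have finite_N: "finite N"
    using card_N by (simp add: card_ge_0_finite)
  have card_R: "card ?R = 2"
    using card_N finite_N z subgroup.one_closed[OF N] by (simp add: card_Diff_subset)
  then obtain p where p: "p \<in> ?R"
    by (metis card.empty ex_in_conv zero_neq_numeral)
  have p_carrier: "p \<in> carrier G" and z_carrier: "z \<in> carrier G"
    using p z subgroup.subset[OF N] by auto
  have "p \<otimes> z \<noteq> z \<otimes> z"
    using p p_carrier z_carrier by auto
  then have pz: "p \<otimes> z \<in> ?R"
    using p z p_carrier z_carrier subgroup.m_closed[OF N] by auto
  have "{p, p \<otimes> z} = ?R"
  proof (rule card_subset_eq)
    show "{p, p \<otimes> z} \<subseteq> ?R"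
      using p pz by (simp only: insert_subset empty_subsetI)
    show "card {p, p \<otimes> z} = card ?R"
      using card_R z p_carrier z_carrier by simp
  qed (use finite_N in blast)
  then show ?thesis
    by blast
qed

lemma (in group) central_klein_four_of_normal:
  assumes N: "N \<lhd> G" and N_iso: "G\<lparr>carrier := N\<rparr> \<cong> C2 \<times>\<times> C2"
    and z: "z \<in> N" "z \<noteq> \<one>" and z_central: "\<And>g. g \<in> carrier G \<Longrightarrow> g \<otimes> z = z \<otimes> g"
  shows "\<exists>p. central_klein_four G z p"
proof -
  have N_sub: "subgroup N G" and N_conj: "\<And>x h. x \<in> carrier G \<Longrightarrow> h \<in> N \<Longrightarrow> x \<otimes> h \<otimes> inv x \<in> N"
    using normal_invE[OF N] by blast+
  have square: "x \<otimes> x = \<one>" if "x \<in> N" for x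
    using iso_C2_C2_square_eq_one[OF subgroup_imp_group[OF N_sub] N_iso] that by simp
  obtain p where R: "N - {\<one>, z} = {p, p \<otimes> z}"
    using order_four_subgroup_decomp[OF N_sub card_iso_C2_C2[OF N_iso, simplified] z square[OF z(1)]]
    by blast
  then have p: "p \<in> N - {\<one>, z}"
    by blast
  have p_carrier: "p \<in> carrier G" and z_carrier: "z \<in> carrier G"
    using p z subgroup.subset[OF N_sub] by auto
  have "x \<otimes> p \<otimes> inv x \<in> N - {\<one>, z}" if x: "x \<in> carrier G" for x
  proof -
    have conj_cancel: "x \<otimes> p \<otimes> inv x = x \<otimes> a \<otimes> inv x \<longleftrightarrow> p = a" if "a \<in> carrier G" for a
      using x p_carrier that by (simp add: inv_solve_right' m_assoc)
    have "x \<otimes> \<one> \<otimes> inv x = \<one>" "x \<otimes> z \<otimes> inv x = z"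
      using x z_carrier by (simp_all add: z_central[OF x] m_assoc)
    then show ?thesis
      using N_conj[OF x] p conj_cancel[of \<one>] conj_cancel[of z] z_carrier by auto
  qed
  then have "central_klein_four G z p"
    using R z z_central p square p_carrier z_carrier by unfold_locales auto
  then show ?thesis ..
qed

theorem mainTheorem10:
  fixes G (structure) and N :: "'a set"
  assumes "group G"
    and "finite (carrier G)"
    and "\<exists>n::nat. card (carrier G) = 2 ^ n"
    and "N \<lhd> G"
    and "(G\<lparr>carrier := N\<rparr>) \<cong> (C2 \<times>\<times> C2)"
  shows "\<not> two_closed_group G TYPE(nat)"
proof -
  interpret group G by (rule assms(1))
  obtain n where order: "order G = 2 ^ n"
    using assms(3) by (auto simp: order_def)
  have "card N = 4"
    using card_iso_C2_C2[OF assms(5)] by simp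
  then have "\<exists>z\<in>N. z \<noteq> \<one> \<and> (\<forall>g\<in>carrier G. g \<otimes> z = z \<otimes> g)"
    using prime_power_normal_subgroup_meets_center[OF two_is_prime_nat order assms(4)]
    by (simp add: card_ge_0_finite)
  then obtain z where "z \<in> N" "z \<noteq> \<one>" "\<forall>g\<in>carrier G. g \<otimes> z = z \<otimes> g"
    by blast
  then obtain p where "central_klein_four G z p"
    using central_klein_four_of_normal[OF assms(4,5)] by blast
  then show ?thesis
    by (rule central_klein_four.not_two_closed[OF _ assms(2)])
qed

end
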